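(* Let $P_0,P_1,Q_2\in\mathbb H$ be pairwise distinct with $\langle P_0,P_1\rangle=\langle P_0,Q_2\rangle=\langle P_1,Q_2\rangle$, and let $R_2=\frac{P_0+P_1+Q_2}{\sqrt{-\langle P_0+P_1+Q_2,P_0+P_1+Q_2\rangle}}\in\mathbb H$ be its centroid. Then there is $\varepsilon_2\in\{-1,1\}$ such that $$R_2=\frac{\sqrt{1-2\langle P_0,P_1\rangle}\,(P_0+P_1)+\varepsilon_2\,P_0\tilde\times P_1}{\sqrt3\,\bigl(1-\langle P_0,P_1\rangle\bigr)}.$$
   Context: $\langle v,w\rangle=-v_1w_1+v_2w_2+v_3w_3$ on $\mathbb R^3$; $\mathbb H=\{P\in\mathbb R^3:\langle P,P\rangle=-1,\ P_1\ge1\}$; $v\tilde\times w:=J(v\times w)$ with $J=\mathrm{diag}(-1,1,1)$ and $\times$ the Euclidean cross product. *)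

theory Defs
  imports "HOL-Analysis.Analysis" "HOL-Analysis.Cross3"
begin

definition mink :: "real^3 \<Rightarrow> real^3 \<Rightarrow> real" where
  "mink v w = - (v$1 * w$1) + v$2 * w$2 + v$3 * w$3"

definition hyp :: "(real^3) set" where
  "hyp = {P. mink P P = -1 \<and> P$1 \<ge> 1}"

definition Jmap :: "real^3 \<Rightarrow> real^3" where
  "Jmap v = vector [- (v$1), v$2, v$3]"

definition lcross :: "real^3 \<Rightarrow> real^3 \<Rightarrow> real^3" where
  "lcross v w = Jmap (cross3 v w)"

end

(* Write t = <P0,P1>. By the reverse Cauchy-Schwarz inequality on the hyperboloid, t < -1.
   The Lorentzian cross product P0 ~x P1 is Lorentz-orthogonal to P0 and P1 and has square
   t^2 - 1 > 0, so the two equal-distance conditions force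
   Q2 = t/(t-1) (P0 + P1) + gamma (P0 ~x P1), and <Q2,Q2> = -1 gives gamma^2 (1-t)^2 = 1 - 2t.
   With r = sqrt (1 - 2t) and epsilon the sign of gamma this makes
   P0 + P1 + Q2 = r/(1-t) (r (P0 + P1) + epsilon (P0 ~x P1)), whose square is -3 r^2. *)

theory Submission
  imports Defs
begin

unbundle cross3_syntax

lemma mink_commute: "mink v w = mink w v"
  by (simp add: mink_def algebra_simps)

lemma mink_add_left: "mink (u + v) w = mink u w + mink v w"
  and mink_add_right: "mink u (v + w) = mink u v + mink u w"
  and mink_scaleR_left: "mink (k *\<^sub>R v) w = k * mink v w"
  and mink_scaleR_right: "mink v (k *\<^sub>R w) = k * mink v w"
  and mink_diff_left: "mink (u - v) w = mink u w - mink v w"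
  by (simp_all add: mink_def algebra_simps)

lemma mink_eq_inner_Jmap: "mink v w = Jmap v \<bullet> w"
  by (simp add: mink_def Jmap_def inner_vec_def sum_3)

lemma Jmap_Jmap [simp]: "Jmap (Jmap v) = v"
  by (simp add: Jmap_def vec_eq_iff forall_3)

lemma Jmap_scaleR: "Jmap (k *\<^sub>R v) = k *\<^sub>R Jmap v"
  by (simp add: Jmap_def vec_eq_iff forall_3)

lemma mink_lcross_orthogonal:
  "mink (lcross a b) a = 0" "mink (lcross a b) b = 0"
  "mink a (lcross a b) = 0" "mink b (lcross a b) = 0"
proof -
  show "mink (lcross a b) a = 0" "mink (lcross a b) b = 0"
    by (simp_all add: mink_eq_inner_Jmap lcross_def dot_cross_self inner_commute)
  then show "mink a (lcross a b) = 0" "mink b (lcross a b) = 0"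
    by (simp_all add: mink_commute)
qed

lemma mink_lcross_self:
  "mink (lcross a b) (lcross a b) = (mink a b)\<^sup>2 - mink a a * mink b b"
  by (simp add: mink_def lcross_def Jmap_def cross_components power2_eq_square algebra_simps)

lemma hyp_mink_less:
  assumes P: "P \<in> hyp" and Q: "Q \<in> hyp" and "P \<noteq> Q"
  shows "mink P Q < -1"
proof (rule ccontr)
  assume "\<not> mink P Q < -1"
  then have le: "P$1 * Q$1 \<le> 1 + P$2 * Q$2 + P$3 * Q$3"
    by (simp add: mink_def)
  have P1: "(P$1)\<^sup>2 = 1 + (P$2)\<^sup>2 + (P$3)\<^sup>2" "P$1 \<ge> 1"
    using P by (auto simp: hyp_def mink_def power2_eq_square)
  have Q1: "(Q$1)\<^sup>2 = 1 + (Q$2)\<^sup>2 + (Q$3)\<^sup>2" "Q$1 \<ge> 1"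
    using Q by (auto simp: hyp_def mink_def power2_eq_square)
  \<comment> \<open>Reverse Cauchy--Schwarz: this sum of squares gives the inequality and its equality case.\<close>
  have identity: "(P$1 * Q$1)\<^sup>2 - (1 + P$2 * Q$2 + P$3 * Q$3)\<^sup>2
      = (P$2 - Q$2)\<^sup>2 + (P$3 - Q$3)\<^sup>2 + (P$2 * Q$3 - P$3 * Q$2)\<^sup>2"
    unfolding power_mult_distrib P1(1) Q1(1) by (simp add: power2_eq_square algebra_simps)
  have "(P$1 * Q$1)\<^sup>2 \<le> (1 + P$2 * Q$2 + P$3 * Q$3)\<^sup>2"
    using le P1(2) Q1(2) by (intro power_mono) simp_all
  then have "(P$2 - Q$2)\<^sup>2 + (P$3 - Q$3)\<^sup>2 + (P$2 * Q$3 - P$3 * Q$2)\<^sup>2 \<le> 0"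
    using identity by linarith
  then have "(P$2 - Q$2)\<^sup>2 = 0" "(P$3 - Q$3)\<^sup>2 = 0"
    by (smt (verit) zero_le_power2)+
  then have spatial: "P$2 = Q$2" "P$3 = Q$3"
    by simp_all
  then have "(P$1)\<^sup>2 = (Q$1)\<^sup>2"
    using P1(1) Q1(1) by simp
  then have "P$1 = Q$1"
    using P1(2) Q1(2) by (simp add: power2_eq_iff_nonneg)
  with spatial have "P = Q"
    by (simp add: vec_eq_iff forall_3)
  with \<open>P \<noteq> Q\<close> show False ..
qed

lemma orthogonal_both_imp_cross_multiple:
  fixes a b y :: "real^3"
  assumes "y \<bullet> a = 0" and "y \<bullet> b = 0"
  shows "((a \<times> b) \<bullet> (a \<times> b)) *\<^sub>R y = ((a \<times> b) \<bullet> y) *\<^sub>R (a \<times> b)"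
proof -
  have "y \<times> (a \<times> b) = 0"
    using assms by (simp add: Lagrange)
  then show ?thesis
    using Lagrange[of "a \<times> b" y "a \<times> b"] by (metis cross_zero_right eq_iff_diff_eq_0)
qed

lemma mink_orthogonal_both_imp_lcross_multiple:
  assumes "mink w a = 0" and "mink w b = 0" and "lcross a b \<noteq> 0"
  shows "\<exists>\<gamma>. w = \<gamma> *\<^sub>R lcross a b"
proof -
  let ?c = "a \<times> b"
  have "?c \<noteq> 0"
    using assms(3) by (auto simp: lcross_def Jmap_def vec_eq_iff forall_3)
  then have cc: "?c \<bullet> ?c \<noteq> 0"
    by simp
  have "(?c \<bullet> ?c) *\<^sub>R Jmap w = (?c \<bullet> Jmap w) *\<^sub>R ?c"
    using assms(1,2) by (intro orthogonal_both_imp_cross_multiple) (simp_all add: mink_eq_inner_Jmap)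
  then have "(?c \<bullet> ?c) *\<^sub>R w = (?c \<bullet> Jmap w) *\<^sub>R lcross a b"
    by (metis Jmap_Jmap Jmap_scaleR lcross_def)
  then have "w = ((?c \<bullet> Jmap w) / (?c \<bullet> ?c)) *\<^sub>R lcross a b"
    using cc by (metis (no_types, lifting) divide_inverse_commute scaleR_scaleR
        right_inverse scaleR_one)
  then show ?thesis ..
qed

lemma equidistant_point_decomposition:
  assumes a: "mink a a = -1" and b: "mink b b = -1" and q: "mink q q = -1"
    and ab: "mink a b = t" and aq: "mink a q = t" and bq: "mink b q = t" and "t < -1"
  shows "\<exists>\<gamma>. q = (t / (t - 1)) *\<^sub>R (a + b) + \<gamma> *\<^sub>R lcross a b
    \<and> \<gamma>\<^sup>2 * (1 - t)\<^sup>2 = 1 - 2 * t"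
proof -
  define \<alpha> where "\<alpha> = t / (t - 1)"
  have \<alpha>: "\<alpha> * (t - 1) = t"
    using \<open>t < -1\<close> by (simp add: \<alpha>_def)
  have cc: "mink (lcross a b) (lcross a b) = t\<^sup>2 - 1"
    using a b ab by (simp add: mink_lcross_self)
  moreover have "t\<^sup>2 > 1"
    using \<open>t < -1\<close> one_less_power[of "-t" 2] by simp
  ultimately have "lcross a b \<noteq> 0"
    by (auto simp: mink_def)
  moreover have "mink (q - \<alpha> *\<^sub>R (a + b)) a = 0" "mink (q - \<alpha> *\<^sub>R (a + b)) b = 0"
    using a b ab aq bq \<alpha> mink_commute[of a b] mink_commute[of q a] mink_commute[of q b]
    by (simp_all add: mink_diff_left mink_scaleR_left mink_add_left algebra_simps)
  ultimately obtain \<gamma> where "q - \<alpha> *\<^sub>R (a + b) = \<gamma> *\<^sub>R lcross a b"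
    using mink_orthogonal_both_imp_lcross_multiple by blast
  then have q_eq: "q = \<alpha> *\<^sub>R (a + b) + \<gamma> *\<^sub>R lcross a b"
    by (simp add: algebra_simps)
  have norm_q: "-1 = \<alpha>\<^sup>2 * (2 * t - 2) + \<gamma>\<^sup>2 * (t\<^sup>2 - 1)"
    using q a b ab cc unfolding q_eq
    by (simp add: mink_add_left mink_add_right mink_scaleR_left mink_scaleR_right mink_commute
        mink_lcross_orthogonal power2_eq_square algebra_simps)
  have "1 - t = (\<alpha>\<^sup>2 * (2 * t - 2) + \<gamma>\<^sup>2 * (t\<^sup>2 - 1)) * (t - 1)"
    unfolding norm_q[symmetric] by simp
  also have "\<dots> = 2 * (\<alpha> * (t - 1))\<^sup>2 + (t + 1) * \<gamma>\<^sup>2 * (1 - t)\<^sup>2"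
    by (simp add: power2_eq_square algebra_simps)
  finally have "(t + 1) * (\<gamma>\<^sup>2 * (1 - t)\<^sup>2 - (1 - 2 * t)) = 0"
    unfolding \<alpha> by (simp add: power2_eq_square algebra_simps)
  then have "\<gamma>\<^sup>2 * (1 - t)\<^sup>2 = 1 - 2 * t"
    using \<open>t < -1\<close> by simp
  with q_eq show ?thesis
    unfolding \<alpha>_def by blast
qed

lemma equidistant_point_eq:
  assumes "mink a a = -1" and "mink b b = -1" and "mink q q = -1"
    and "mink a b = t" and "mink a q = t" and "mink b q = t" and "t < -1"
  shows "\<exists>\<epsilon>\<in>{-1, 1}. q = (t / (t - 1)) *\<^sub>R (a + b)
    + (\<epsilon> * sqrt (1 - 2 * t) / (1 - t)) *\<^sub>R lcross a b"
proof -
  obtain \<gamma> where q: "q = (t / (t - 1)) *\<^sub>R (a + b) + \<gamma> *\<^sub>R lcross a b"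
    and \<gamma>: "\<gamma>\<^sup>2 * (1 - t)\<^sup>2 = 1 - 2 * t"
    using equidistant_point_decomposition[OF assms] by blast
  have "(\<gamma> * (1 - t))\<^sup>2 = (sqrt (1 - 2 * t))\<^sup>2"
    using \<gamma> \<open>t < -1\<close> by (simp add: power_mult_distrib)
  then have "\<gamma> * (1 - t) = sqrt (1 - 2 * t) \<or> \<gamma> * (1 - t) = - sqrt (1 - 2 * t)"
    unfolding power2_eq_iff .
  then obtain \<epsilon> :: real where "\<epsilon> \<in> {-1, 1}" "\<gamma> = \<epsilon> * sqrt (1 - 2 * t) / (1 - t)"
    using \<open>t < -1\<close> by (force simp: field_simps)
  with q show ?thesis
    by blast
qed

lemma equilateral_centroid_eq:
  assumes "mink a a = -1" and "mink b b = -1" and "mink q q = -1"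
    and "mink a b = t" and "mink a q = t" and "mink b q = t" and "t < -1"
  shows "\<exists>\<epsilon>\<in>{-1, 1}. (1 / sqrt (- mink (a + b + q) (a + b + q))) *\<^sub>R (a + b + q)
    = (1 / (sqrt 3 * (1 - t))) *\<^sub>R (sqrt (1 - 2 * t) *\<^sub>R (a + b) + \<epsilon> *\<^sub>R lcross a b)"
proof -
  define r where "r = sqrt (1 - 2 * t)"
  have r: "r > 0" "r\<^sup>2 = 1 - 2 * t"
    using \<open>t < -1\<close> by (simp_all add: r_def)
  obtain \<epsilon> where \<epsilon>: "\<epsilon> \<in> {-1, 1}"
    and q: "q = (t / (t - 1)) *\<^sub>R (a + b) + (\<epsilon> * r / (1 - t)) *\<^sub>R lcross a b"
    using equidistant_point_eq[OF assms] unfolding r_def by blast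
  let ?v = "r *\<^sub>R (a + b) + \<epsilon> *\<^sub>R lcross a b"
  have coeff: "1 + t / (t - 1) = r / (1 - t) * r"
  proof -
    have "1 + t / (t - 1) = (1 - 2 * t) / (1 - t)"
      using \<open>t < -1\<close> by (simp add: field_simps)
    then show ?thesis
      using r(2) by (simp add: power2_eq_square)
  qed
  have "a + b + q = (1 + t / (t - 1)) *\<^sub>R (a + b) + (\<epsilon> * r / (1 - t)) *\<^sub>R lcross a b"
    unfolding q by (simp add: scaleR_add_left)
  also have "\<dots> = (r / (1 - t)) *\<^sub>R ?v"
    unfolding coeff by (simp add: scaleR_add_right ac_simps)
  finally have sum: "a + b + q = (r / (1 - t)) *\<^sub>R ?v" .
  have "mink (a + b + q) (a + b + q)
      = mink a a + mink b b + mink q q + 2 * mink a b + 2 * mink a q + 2 * mink b q"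
    by (simp add: mink_add_left mink_add_right mink_commute)
  then have "- mink (a + b + q) (a + b + q) = 3 * r\<^sup>2"
    using assms(1-6) r(2) by simp
  then have "sqrt (- mink (a + b + q) (a + b + q)) = sqrt 3 * r"
    using r(1) by (simp add: real_sqrt_mult)
  then have "(1 / sqrt (- mink (a + b + q) (a + b + q))) *\<^sub>R (a + b + q)
      = (1 / (sqrt 3 * r) * (r / (1 - t))) *\<^sub>R ?v"
    by (simp only: sum scaleR_scaleR)
  also have "\<dots> = (1 / (sqrt 3 * (1 - t))) *\<^sub>R ?v"
    using r(1) by simp
  finally show ?thesis
    using \<epsilon> unfolding r_def by blast
qed

theorem lemma2p4:
  fixes P0 P1 Q2 :: "real^3"
  assumes "P0 \<in> hyp" and "P1 \<in> hyp" and "Q2 \<in> hyp"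
    and "P0 \<noteq> P1" and "P0 \<noteq> Q2" and "P1 \<noteq> Q2"
    and "mink P0 P1 = mink P0 Q2" and "mink P0 Q2 = mink P1 Q2"
  shows "\<exists>\<epsilon>::real. \<epsilon> \<in> {-1, 1} \<and>
    (1 / sqrt (- mink (P0 + P1 + Q2) (P0 + P1 + Q2))) *\<^sub>R (P0 + P1 + Q2) =
    (1 / (sqrt 3 * (1 - mink P0 P1))) *\<^sub>R
      (sqrt (1 - 2 * mink P0 P1) *\<^sub>R (P0 + P1) + \<epsilon> *\<^sub>R lcross P0 P1)"
proof -
  have unit: "mink P0 P0 = -1" "mink P1 P1 = -1" "mink Q2 Q2 = -1"
    using assms(1-3) by (simp_all add: hyp_def)
  have equi: "mink P0 Q2 = mink P0 P1" "mink P1 Q2 = mink P0 P1"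
    using assms(7,8) by simp_all
  have "mink P0 P1 < -1"
    using assms(1,2,4) by (rule hyp_mink_less)
  then show ?thesis
    using equilateral_centroid_eq[OF unit refl equi] by blast
qed

end
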